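(* Consider the continuous-variable Deutsch–Jozsa algorithm defined below, with measurement window $\delta=\pi/(2P)$. For every $n$, every $P>0$ and every function $f:\{0,1\}^n\to\{0,1\}$ promised to be constant or balanced, an error probability of $O(e^{-m})$ in deciding whether $f$ is constant or balanced can be achieved by making $O(m)$ independent repetitions of the algorithm (each repetition with a fresh preparation of the initial state and the same oracle $f$), with the hidden constants independent of $N=2^n$ and of $f$.
   Context: Deutsch–Jozsa problem: given $f:\{0,1\}^n\to\{0,1\}$ promised to be either constant (same value on all inputs) or balanced (value $0$ on exactly half of the inputs), decide which. Let $N=2^n$ and let $z=z_1z_2\cdots z_N\in\{0,1\}^N$ be the list of values of $f$ on the inputs in lexicographic order. Continuous-variable (CV) Deutsch–Jozsa algorithm with parameter $P>0$: prepare the position wave function $\phi_0(x)=\frac{\sin(Px)}{\sqrt{\pi P}\,x}$; apply the Fourier transform $\tilde\phi(p)=\frac{1}{\sqrt{2\pi}}\int_{-\infty}^{\infty}e^{\imath p x}\phi(x)\,dx$, giving the momentum wave function equal to $1/\sqrt{2P}$ on $[-P,P]$ and $0$ elsewhere; the oracle multiplies this by $f_z(p)=\sum_{j=1}^{N}(-1)^{z_j}\,\mathbf{1}_{I_j}(p)$, where $[-P,P]$ is partitioned into $N$ consecutive equal intervals $I_1,\dots,I_N$ of width $2P/N$ ordered from $p=+P$ down to $p=-P$ (so $I_j$ is centred at $\frac{N-(2j-1)}{N}P$); then apply the inverse Fourier transform, yielding $$\phi_z(x)=\frac{\sin(Px/N)}{\sqrt{P\pi}\,x}\sum_{j=1}^{N}(-1)^{z_j}\exp\!\Big(\imath\,\tfrac{N-(2j-1)}{N}Px\Big).$$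 Finally measure position and output $1$ ("detection") if the outcome lies in $[-\delta,\delta]$ and $0$ otherwise; thus one run outputs $1$ with probability $\int_{-\delta}^{\delta}|\phi_z(x)|^2\,dx$. Error probability means the probability that the final decision (made from the outcomes of the repetitions) is wrong. *)

theory Defs
  imports "HOL-Analysis.Analysis"
begin

text \<open>The list z of values of f (True = value 1, False = value 0), of length N = 2^n.
  Final position wave function of the CV Deutsch--Jozsa algorithm with parameter P.\<close>
definition cvdj_phi :: "nat \<Rightarrow> real \<Rightarrow> bool list \<Rightarrow> real \<Rightarrow> complex" where
  "cvdj_phi n P z x =
     (let N = (2::nat) ^ n in
      complex_of_real (sin (P * x / real N) / (sqrt (P * pi) * x)) *
      (\<Sum>j = 1..N. (if z ! (j - 1) then -1 else 1) *
          exp (\<i> * complex_of_real ((real N - (2 * real j - 1)) / real N * P * x))))"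

definition cvdj_delta :: "real \<Rightarrow> real" where
  "cvdj_delta P = pi / (2 * P)"

text \<open>Probability that one run outputs 1 (detection in [-delta, delta]).\<close>
definition cvdj_detect_prob :: "nat \<Rightarrow> real \<Rightarrow> bool list \<Rightarrow> real" where
  "cvdj_detect_prob n P z =
     integral {- cvdj_delta P .. cvdj_delta P} (\<lambda>x. (cmod (cvdj_phi n P z x))\<^sup>2)"

definition is_constant_list :: "nat \<Rightarrow> bool list \<Rightarrow> bool" where
  "is_constant_list n z \<longleftrightarrow> length z = 2 ^ n \<and> (\<exists>b. z = replicate (2 ^ n) b)"

definition is_balanced_list :: "nat \<Rightarrow> bool list \<Rightarrow> bool" where
  "is_balanced_list n z \<longleftrightarrow> length z = 2 ^ n \<and>
     2 * card {j. j < 2 ^ n \<and> \<not> z ! j} = 2 ^ n"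

text \<open>Probability of the outcome sequence bs (True = detection) for r independent runs,
  each detecting with probability p.\<close>
definition outcome_prob :: "real \<Rightarrow> bool list \<Rightarrow> real" where
  "outcome_prob p bs = prod_list (map (\<lambda>b. if b then p else 1 - p) bs)"

text \<open>Error probability of the decision rule D (D bs = True means "constant") after r
  independent repetitions on oracle z.\<close>
definition cvdj_error_prob :: "nat \<Rightarrow> real \<Rightarrow> bool list \<Rightarrow> nat \<Rightarrow> (bool list \<Rightarrow> bool) \<Rightarrow> real" where
  "cvdj_error_prob n P z r D =
     (\<Sum>bs \<in> {bs. length bs = r \<and> D bs \<noteq> is_constant_list n z}.
        outcome_prob (cvdj_detect_prob n P z) bs)"

end

theory Submission
  imports Defs
begin

text \<open>A constant oracle gives the sinc-squared density \<open>|\<phi>(x)|^2 = sin(Px)^2/(\<pi>Px^2)\<close>, so a single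
  run detects with probability at least \<open>1 - \<pi>^2/36 > 0.72\<close>. For a balanced oracle the
  phases \<open>\<plusminus>1\<close> sum to zero, which makes the wave function vanish to first order at the
  origin: \<open>|\<phi>(x)|^2 \<le> P^3x^2/(4\<pi>)\<close>, and the detection probability is at most
  \<open>\<pi>^2/48 < 0.21\<close>. Neither bound depends on \<open>N\<close>. Running the algorithm \<open>9m\<close> times and
  answering "constant" iff at least \<open>4m\<close> runs detect therefore errs with probability at most
  \<open>e^{-m}\<close>, by Chernoff bounds on the number of detections.\<close>

lemma sum_prod_list_lists_length:
  fixes a c :: "'a::comm_semiring_1"
  shows "(\<Sum>bs\<in>{bs. length bs = r}. prod_list (map (\<lambda>b. if b then a else c) bs)) = (a + c) ^ r"
proof (induction r)
  case 0
  have "{bs::bool list. length bs = 0} = {[]}" by auto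
  then show ?case by simp
next
  case (Suc r)
  let ?w = "\<lambda>bs. prod_list (map (\<lambda>b. if b then a else c) bs)"
  have split: "{bs. length bs = Suc r} = (\<lambda>(xs, b). b # xs) ` ({bs. length bs = r} \<times> UNIV)"
    using lists_length_Suc_eq[of UNIV r] by simp
  have inj: "inj_on (\<lambda>(xs, b). b # xs) ({bs::bool list. length bs = r} \<times> UNIV)"
    by (auto simp: inj_on_def)
  have "(\<Sum>bs\<in>{bs. length bs = Suc r}. ?w bs) = (\<Sum>xs\<in>{bs. length bs = r}. \<Sum>b\<in>UNIV. ?w (b # xs))"
    unfolding split sum.reindex[OF inj] by (simp add: sum.cartesian_product case_prod_beta)
  also have "\<dots> = (\<Sum>xs\<in>{bs. length bs = r}. (a + c) * ?w xs)"
    by (intro sum.cong) (auto simp: UNIV_bool algebra_simps)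
  also have "\<dots> = (a + c) ^ Suc r"
    using Suc by (simp add: sum_distrib_left[symmetric])
  finally show ?case .
qed

lemma outcome_prob_nonneg: "0 \<le> p \<Longrightarrow> p \<le> 1 \<Longrightarrow> 0 \<le> outcome_prob p bs"
  unfolding outcome_prob_def by (induction bs) auto

lemma sum_outcome_prob_mult_power_count:
  "(\<Sum>bs\<in>{bs. length bs = r}. outcome_prob p bs * l ^ count_list bs True) = (p * l + (1 - p)) ^ r"
proof -
  have "outcome_prob p bs * l ^ count_list bs True = prod_list (map (\<lambda>b. if b then p * l else 1 - p) bs)"
    for bs
    by (induction bs) (auto simp: outcome_prob_def)
  then show ?thesis by (simp add: sum_prod_list_lists_length)
qed

text \<open>Markov's inequality for the exponential moment \<open>l ^ (number of detections)\<close>.\<close>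
lemma outcome_prob_tail_le:
  assumes "0 \<le> p" "p \<le> 1" "0 < l"
    and S: "S \<subseteq> {bs. length bs = r}" and tail: "\<And>bs. bs \<in> S \<Longrightarrow> l ^ k \<le> l ^ count_list bs True"
  shows "(\<Sum>bs\<in>S. outcome_prob p bs) \<le> (p * l + (1 - p)) ^ r / l ^ k"
proof -
  have "(\<Sum>bs\<in>S. outcome_prob p bs) \<le> (\<Sum>bs\<in>S. outcome_prob p bs * l ^ count_list bs True / l ^ k)"
    using tail outcome_prob_nonneg[OF assms(1,2)] \<open>0 < l\<close>
    by (intro sum_mono) (simp add: le_divide_eq mult_left_mono)
  also have "\<dots> \<le> (\<Sum>bs\<in>{bs. length bs = r}. outcome_prob p bs * l ^ count_list bs True / l ^ k)"
    using S outcome_prob_nonneg[OF assms(1,2)] \<open>0 < l\<close> finite_lists_length_eq[of "UNIV::bool set" r]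
    by (intro sum_mono2) auto
  also have "\<dots> = (p * l + (1 - p)) ^ r / l ^ k"
    by (simp add: sum_divide_distrib[symmetric] sum_outcome_prob_mult_power_count)
  finally show ?thesis .
qed

lemma power_le_exp_neg:
  fixes q :: real
  assumes "0 \<le> q" "q \<le> 1/3"
  shows "q ^ m \<le> exp (- real m)"
proof -
  have "q * exp 1 \<le> 1/3 * 3"
    using assms exp_le by (intro mult_mono) auto
  then have "q \<le> exp (-1)"
    by (simp add: exp_minus field_simps)
  then have "q ^ m \<le> exp (-1) ^ m" using assms by (intro power_mono) auto
  then show ?thesis by (simp add: exp_of_nat_mult[symmetric])
qed

lemma outcome_prob_few_detections_le:
  fixes p :: real
  assumes "0.72 \<le> p" "p \<le> 1"
  shows "(\<Sum>bs\<in>{bs. length bs = 9 * m \<and> count_list bs True < 4 * m}. outcome_prob p bs) \<le> exp (- real m)"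
proof -
  have "(\<Sum>bs\<in>{bs. length bs = 9 * m \<and> count_list bs True < 4 * m}. outcome_prob p bs)
      \<le> (p * (1/2) + (1 - p)) ^ (9 * m) / (1/2) ^ (4 * m)"
    using assms by (intro outcome_prob_tail_le) (auto intro: power_decreasing)
  also have "\<dots> = ((1 - p / 2) ^ 9 / (1/2) ^ 4) ^ m"
    unfolding power_mult power_divide by simp
  also have "\<dots> \<le> exp (- real m)"
  proof (rule power_le_exp_neg)
    have "(1 - p / 2) ^ 9 \<le> 0.64 ^ 9" using assms by (intro power_mono) auto
    then show "(1 - p / 2) ^ 9 / (1/2) ^ 4 \<le> 1/3" by (simp add: power_divide)
  qed (use assms in simp)
  finally show ?thesis .
qed

lemma outcome_prob_many_detections_le:
  fixes p :: real
  assumes "0 \<le> p" "p \<le> 0.21"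
  shows "(\<Sum>bs\<in>{bs. length bs = 9 * m \<and> 4 * m \<le> count_list bs True}. outcome_prob p bs) \<le> exp (- real m)"
proof -
  have "(\<Sum>bs\<in>{bs. length bs = 9 * m \<and> 4 * m \<le> count_list bs True}. outcome_prob p bs)
      \<le> (p * (5/2) + (1 - p)) ^ (9 * m) / (5/2) ^ (4 * m)"
    using assms by (intro outcome_prob_tail_le) (auto intro: power_increasing)
  also have "\<dots> = ((1 + 3 * p / 2) ^ 9 / (5/2) ^ 4) ^ m"
    unfolding power_mult power_divide by (simp add: algebra_simps)
  also have "\<dots> \<le> exp (- real m)"
  proof (rule power_le_exp_neg)
    have "(1 + 3 * p / 2) ^ 9 \<le> 1.315 ^ 9" using assms by (intro power_mono) auto
    then show "(1 + 3 * p / 2) ^ 9 / (5/2) ^ 4 \<le> 1/3" by (simp add: power_divide)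
  qed (use assms in simp)
  finally show ?thesis .
qed

text \<open>Multiplying by \<open>2\<i> sin t = e^{\<i>t} - e^{-\<i>t}\<close> makes the sum telescope.\<close>
lemma sin_mult_sum_exp_eq_sin:
  fixes t :: real and N :: nat
  shows "complex_of_real (sin t) *
      (\<Sum>j = 1..N. exp (\<i> * complex_of_real ((real N - (2 * real j - 1)) * t)))
    = complex_of_real (sin (real N * t))"
proof -
  define g where "g j = exp (\<i> * complex_of_real ((real N - 2 * real j) * t))" for j :: nat
  have sin_exp: "complex_of_real (sin u)
      = (exp (\<i> * complex_of_real u) - exp (- (\<i> * complex_of_real u))) / (2 * \<i>)" for u
    by (simp add: sin_exp_eq sin_of_real[symmetric])
  have summand: "(exp (\<i> * complex_of_real t) - exp (- (\<i> * complex_of_real t))) *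
      exp (\<i> * complex_of_real ((real N - (2 * real j - 1)) * t)) = g (j - 1) - g j"
    if "j \<in> {1..N}" for j
  proof -
    have j: "real (j - 1) = real j - 1" using that by auto
    show ?thesis
      unfolding left_diff_distrib exp_add[symmetric] g_def j
      by (intro arg_cong2[where f="(-)"] arg_cong[where f=exp]) (simp_all add: algebra_simps)
  qed
  have "complex_of_real (sin t) *
      (\<Sum>j = 1..N. exp (\<i> * complex_of_real ((real N - (2 * real j - 1)) * t)))
    = (\<Sum>j = 1..N. g (j - 1) - g j) / (2 * \<i>)"
    unfolding sin_exp[of t] sum_distrib_left sum_divide_distrib times_divide_eq_left
    using summand by (intro sum.cong) simp_all
  also have "(\<Sum>j = 1..N. g (j - 1) - g j) = - (\<Sum>j = Suc 0..N. g j - g (j - 1))"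
    by (simp add: sum_negf[symmetric])
  also have "(\<Sum>j = Suc 0..N. g j - g (j - 1)) = g N - g 0"
    by (rule sum_telescope'') simp
  also have "- (g N - g 0) / (2 * \<i>) = complex_of_real (sin (real N * t))"
    unfolding sin_exp g_def by (simp add: algebra_simps)
  finally show ?thesis .
qed

lemma norm_cvdj_phi_constant_sq:
  assumes P: "P > 0" and z: "is_constant_list n z"
  shows "(cmod (cvdj_phi n P z x))\<^sup>2 = (sin (P * x))\<^sup>2 / (P * pi * x\<^sup>2)"
proof -
  define N where "N = (2::nat) ^ n"
  have N0: "real N > 0" unfolding N_def by simp
  obtain b where zb: "z = replicate N b" using z unfolding is_constant_list_def N_def by auto
  define t where "t = P * x / real N"
  define s :: complex where "s = (if b then -1 else 1)"
  have phase: "(real N - (2 * real j - 1)) / real N * P * x = (real N - (2 * real j - 1)) * t" for j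
    unfolding t_def using N0 by (simp add: field_simps)
  have signs: "(\<Sum>j = 1..N. (if z ! (j - 1) then -1 else 1) *
          exp (\<i> * complex_of_real ((real N - (2 * real j - 1)) / real N * P * x)))
      = s * (\<Sum>j = 1..N. exp (\<i> * complex_of_real ((real N - (2 * real j - 1)) * t)))"
    unfolding sum_distrib_left s_def phase by (intro sum.cong) (auto simp: zb)
  have "cvdj_phi n P z x = s * complex_of_real (1 / (sqrt (P * pi) * x)) *
      (complex_of_real (sin t) * (\<Sum>j = 1..N. exp (\<i> * complex_of_real ((real N - (2 * real j - 1)) * t))))"
    unfolding cvdj_phi_def Let_def N_def[symmetric] signs t_def[symmetric] by (simp add: algebra_simps)
  also have "\<dots> = s * complex_of_real (sin (P * x) / (sqrt (P * pi) * x))"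
    unfolding sin_mult_sum_exp_eq_sin using N0 by (simp add: t_def)
  finally have "cmod (cvdj_phi n P z x) = \<bar>sin (P * x) / (sqrt (P * pi) * x)\<bar>"
    by (simp add: norm_mult s_def del: of_real_mult of_real_divide)
  then show ?thesis
    using P by (simp add: power_divide power_mult_distrib)
qed

lemma norm_sum_mult_exp_le:
  fixes a :: "'i \<Rightarrow> complex" and \<theta> :: "'i \<Rightarrow> real"
  assumes "sum a I = 0" and "\<And>j. j \<in> I \<Longrightarrow> cmod (a j) \<le> 1"
  shows "cmod (\<Sum>j\<in>I. a j * exp (\<i> * complex_of_real (\<theta> j))) \<le> (\<Sum>j\<in>I. \<bar>\<theta> j\<bar>)"
proof -
  have "(\<Sum>j\<in>I. a j * exp (\<i> * complex_of_real (\<theta> j)))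
      = (\<Sum>j\<in>I. a j * (exp (\<i> * complex_of_real (\<theta> j)) - 1))"
    using assms(1) by (simp add: algebra_simps sum_subtractf)
  also have "cmod \<dots> \<le> (\<Sum>j\<in>I. cmod (a j) * cmod (exp (\<i> * complex_of_real (\<theta> j)) - 1))"
    by (rule order.trans[OF norm_sum]) (simp add: norm_mult)
  also have "\<dots> \<le> (\<Sum>j\<in>I. 1 * \<bar>\<theta> j\<bar>)"
  proof (intro sum_mono mult_mono)
    show "cmod (exp (\<i> * complex_of_real (\<theta> j)) - 1) \<le> \<bar>\<theta> j\<bar>" for j
      using dist_exp_i_1[of "\<theta> j"] abs_sin_x_le_abs_x[of "\<theta> j / 2"] by simp
  qed (use assms(2) in auto)
  finally show ?thesis by simp
qed

lemma sum_abs_centered_odd: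
  "(\<Sum>j = 1..2 * M. \<bar>real (2 * M) - (2 * real j - 1)\<bar>) = 2 * real M ^ 2"
proof (induction M)
  case (Suc M)
  define f where "f j = \<bar>real (2 * Suc M) - (2 * real j - 1)\<bar>" for j :: nat
  have "(\<Sum>j = 1..2 * Suc M. f j) = f 1 + (\<Sum>j = Suc 1..Suc (2 * M). f j) + f (2 * M + 2)"
    by (simp add: sum.atLeast_Suc_atMost)
  also have "(\<Sum>j = Suc 1..Suc (2 * M). f j) = (\<Sum>j = 1..2 * M. f (Suc j))"
    by (rule sum.shift_bounds_cl_Suc_ivl)
  also have "(\<Sum>j = 1..2 * M. f (Suc j)) = (\<Sum>j = 1..2 * M. \<bar>real (2 * M) - (2 * real j - 1)\<bar>)"
    unfolding f_def by (intro sum.cong) (auto simp: algebra_simps)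
  finally show ?case unfolding f_def Suc.IH by (simp add: power2_eq_square algebra_simps)
qed simp

lemma sum_signs_balanced:
  assumes "is_balanced_list n z"
  shows "(\<Sum>j = 1..2 ^ n. (if z ! (j - 1) then -1 else 1 :: complex)) = 0"
proof -
  define N where "N = (2::nat) ^ n"
  have half: "2 * card {j \<in> {..<N}. \<not> z ! j} = N"
    using assms unfolding is_balanced_list_def N_def by (simp add: lessThan_def)
  have "(\<Sum>j = 1..N. (if z ! (j - 1) then -1 else 1 :: complex))
      = (\<Sum>j<N. 2 * (if \<not> z ! j then 1 else 0) - 1)"
    by (simp add: sum.atLeast1_atMost_eq) (intro sum.cong; simp)
  also have "\<dots> = 2 * of_nat (card {j \<in> {..<N}. \<not> z ! j}) - of_nat N"
    by (simp add: sum_subtractf sum_distrib_left[symmetric] sum.inter_filter[symmetric])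
  also have "\<dots> = 0"
    using arg_cong[OF half, of "of_nat :: nat \<Rightarrow> complex"] by simp
  finally show ?thesis unfolding N_def .
qed

lemma norm_cvdj_phi_balanced_sq_le:
  assumes P: "P > 0" and z: "is_balanced_list n z"
  shows "(cmod (cvdj_phi n P z x))\<^sup>2 \<le> P ^ 3 * x\<^sup>2 / (4 * pi)"
proof (cases "x = 0")
  case True
  then show ?thesis by (simp add: cvdj_phi_def)
next
  case x: False
  define N where "N = (2::nat) ^ n"
  have N0: "real N > 0" unfolding N_def by simp
  obtain M where M: "N = 2 * M" using z unfolding is_balanced_list_def N_def by metis
  define S where "S = (\<Sum>j = 1..N. (if z ! (j - 1) then -1 else 1) *
      exp (\<i> * complex_of_real ((real N - (2 * real j - 1)) / real N * P * x)))"
  have "cmod S \<le> (\<Sum>j = 1..N. \<bar>(real N - (2 * real j - 1)) / real N * P * x\<bar>)"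
    unfolding S_def using sum_signs_balanced[OF z] by (intro norm_sum_mult_exp_le) (auto simp: N_def)
  also have "\<dots> = \<bar>P * x\<bar> / real N * (\<Sum>j = 1..N. \<bar>real N - (2 * real j - 1)\<bar>)"
    unfolding sum_distrib_left using N0 by (intro sum.cong) (auto simp: abs_mult)
  also have "\<dots> = \<bar>P * x\<bar> * real N / 2"
    using N0 sum_abs_centered_odd[of M] unfolding M by (simp add: power2_eq_square)
  finally have S_le: "cmod S \<le> \<bar>P * x\<bar> * real N / 2" .
  have sin_le: "\<bar>sin (P * x / real N)\<bar> \<le> \<bar>P * x\<bar> / real N"
    using abs_sin_x_le_abs_x[of "P * x / real N"] N0 by (simp add: abs_divide)
  have "cmod (cvdj_phi n P z x) = \<bar>sin (P * x / real N)\<bar> / (sqrt (P * pi) * \<bar>x\<bar>) * cmod S"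
    unfolding cvdj_phi_def Let_def N_def[symmetric] S_def[symmetric] norm_mult norm_of_real
    using P by (simp add: abs_divide abs_mult)
  also have "\<dots> \<le> (\<bar>P * x\<bar> / real N) / (sqrt (P * pi) * \<bar>x\<bar>) * (\<bar>P * x\<bar> * real N / 2)"
    using sin_le S_le P x by (intro mult_mono divide_right_mono) auto
  also have "\<dots> = P\<^sup>2 * \<bar>x\<bar> / (2 * sqrt (P * pi))"
    using N0 P x by (simp add: abs_mult power2_eq_square field_simps)
  finally have "(cmod (cvdj_phi n P z x))\<^sup>2 \<le> (P\<^sup>2 * \<bar>x\<bar> / (2 * sqrt (P * pi)))\<^sup>2"
    by (intro power_mono) auto
  also have "\<dots> = P ^ 3 * x\<^sup>2 / (4 * pi)"
    using P by (simp add: power_divide power_mult_distrib power2_eq_square power3_eq_cube)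
  finally show ?thesis .
qed

lemma has_integral_real_antiderivative:
  assumes "a \<le> b" "\<And>x. (F has_real_derivative f x) (at x)"
  shows "(f has_integral (F b - F a)) {a..b}"
  using assms by (intro fundamental_theorem_of_calculus)
    (auto simp: has_real_derivative_iff_has_vector_derivative[symmetric] intro: has_field_derivative_at_within)

lemma cvdj_detect_prob_balanced:
  assumes P: "P > 0" and z: "is_balanced_list n z"
  shows "0 \<le> cvdj_detect_prob n P z" "cvdj_detect_prob n P z \<le> pi\<^sup>2 / 48"
proof -
  define d where "d = pi / (2 * P)"
  define f where "f x = (cmod (cvdj_phi n P z x))\<^sup>2" for x
  have p_eq: "cvdj_detect_prob n P z = integral {-d..d} f"
    unfolding cvdj_detect_prob_def cvdj_delta_def d_def f_def ..
  show "0 \<le> cvdj_detect_prob n P z"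
    unfolding p_eq
  proof (cases "f integrable_on {-d..d}")
    case True
    then show "0 \<le> integral {-d..d} f" by (rule integral_nonneg) (simp add: f_def)
  qed (simp add: not_integrable_integral)
  define g where "g x = P ^ 3 * x\<^sup>2 / (4 * pi)" for x
  have val: "P ^ 3 * d ^ 3 / (12 * pi) - P ^ 3 * (-d) ^ 3 / (12 * pi) = pi\<^sup>2 / 48"
    unfolding d_def using P by (simp add: power_divide power2_eq_square power3_eq_cube)
  have g_int: "(g has_integral pi\<^sup>2 / 48) {-d..d}"
    unfolding val[symmetric] g_def using P
    by (intro has_integral_real_antiderivative[where F="\<lambda>x. P ^ 3 * x ^ 3 / (12 * pi)"])
      (simp add: d_def | rule derivative_eq_intros refl)+
  show "cvdj_detect_prob n P z \<le> pi\<^sup>2 / 48"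
    unfolding p_eq
  proof (cases "f integrable_on {-d..d}")
    case True
    then show "integral {-d..d} f \<le> pi\<^sup>2 / 48"
      by (rule has_integral_le[OF integrable_integral g_int])
        (simp add: f_def g_def norm_cvdj_phi_balanced_sq_le[OF P z])
  qed (simp add: not_integrable_integral)
qed

lemma sinc_sq_ge:
  fixes u :: real
  assumes "u \<noteq> 0" "u\<^sup>2 \<le> 6"
  shows "1 - u\<^sup>2 / 3 \<le> (sin u / u)\<^sup>2"
proof -
  have "\<bar>sin u - u\<bar> \<le> \<bar>u\<bar> ^ 3 / 6"
    using Maclaurin_sin_bound[of u 3] by (simp add: sin_coeff_def numeral_3_eq_3 fact_numeral)
  then have "\<bar>sin u - u\<bar> / \<bar>u\<bar> \<le> (\<bar>u\<bar> ^ 3 / 6) / \<bar>u\<bar>"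
    by (rule divide_right_mono) simp
  moreover have "\<bar>sin u / u - 1\<bar> = \<bar>sin u - u\<bar> / \<bar>u\<bar>"
    using assms by (simp add: abs_divide[symmetric] diff_divide_distrib)
  ultimately have "\<bar>sin u / u - 1\<bar> \<le> (\<bar>u\<bar> ^ 3 / 6) / \<bar>u\<bar>"
    by simp
  also have "\<dots> = u\<^sup>2 / 6"
    using assms by (simp add: power2_eq_square power3_eq_cube)
  finally have "1 - u\<^sup>2 / 6 \<le> sin u / u" by linarith
  then have "(1 - u\<^sup>2 / 6)\<^sup>2 \<le> (sin u / u)\<^sup>2"
    using assms by (intro power_mono) auto
  moreover have "(1 - u\<^sup>2 / 6)\<^sup>2 = 1 - u\<^sup>2 / 3 + (u\<^sup>2)\<^sup>2 / 36"
    by (simp add: power2_eq_square algebra_simps)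
  ultimately show ?thesis using zero_le_power2[of "u\<^sup>2"] by linarith
qed

lemma sin_sq_div_le:
  assumes "P > 0"
  shows "(sin (P * x))\<^sup>2 / (P * pi * x\<^sup>2) \<le> P / pi"
proof (cases "x = 0")
  case False
  have "(sin (P * x))\<^sup>2 \<le> (P * x)\<^sup>2"
    using abs_sin_x_le_abs_x[of "P * x"] by (metis abs_ge_zero power_mono power2_abs)
  then have "(sin (P * x))\<^sup>2 / (P * pi * x\<^sup>2) \<le> (P * x)\<^sup>2 / (P * pi * x\<^sup>2)"
    using assms False by (intro divide_right_mono) auto
  also have "\<dots> = P / pi" using assms False by (simp add: power2_eq_square)
  finally show ?thesis .
qed (use assms in simp)

lemma sin_sq_div_ge:
  assumes P: "P > 0" and x: "x \<noteq> 0" "\<bar>x\<bar> \<le> pi / (2 * P)"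
  shows "P / pi * (1 - P\<^sup>2 * x\<^sup>2 / 3) \<le> (sin (P * x))\<^sup>2 / (P * pi * x\<^sup>2)"
proof -
  have "\<bar>P * x\<bar> \<le> pi / 2" using x P by (simp add: abs_mult field_simps)
  then have "(P * x)\<^sup>2 \<le> (pi / 2)\<^sup>2"
    by (metis abs_ge_zero power_mono power2_abs)
  also have "\<dots> \<le> 6"
    using mult_mono[OF less_imp_le[OF pi_less_4] less_imp_le[OF pi_less_4]] pi_gt_zero
    by (simp add: power_divide power2_eq_square)
  finally have "P / pi * (1 - (P * x)\<^sup>2 / 3) \<le> P / pi * (sin (P * x) / (P * x))\<^sup>2"
    using sinc_sq_ge[of "P * x"] P x by (intro mult_left_mono) auto
  then show ?thesis
    using P x by (simp add: power_mult_distrib power2_eq_square field_simps)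
qed

lemma integral_sin_sq_div_window:
  assumes P: "P > 0"
  defines "d \<equiv> pi / (2 * P)" and "h \<equiv> \<lambda>x. (sin (P * x))\<^sup>2 / (P * pi * x\<^sup>2)"
  shows "1 - pi\<^sup>2 / 36 \<le> integral {-d..d} h" "integral {-d..d} h \<le> 1"
proof -
  have d0: "d > 0" unfolding d_def using P by simp
  have h_le: "\<bar>h x\<bar> \<le> P / pi" for x
    using sin_sq_div_le[OF P, of x] P by (simp add: h_def)
  have const: "((\<lambda>x. P / pi) has_integral 1) {-d..d}"
    using has_integral_const_real[of "P / pi" "-d" d] d0 P by (simp add: d_def)
  have "h \<in> borel_measurable (lebesgue_on {-d..d})"
    unfolding h_def by (intro measurable_restrict_space1 measurable_completion) simp
  then have "h integrable_on {-d..d}"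
    by (rule measurable_bounded_by_integrable_imp_integrable_real[OF _ _ h_le]) (use const in auto)
  then have h_int: "(h has_integral integral {-d..d} h) {-d..d}" ..
  show "integral {-d..d} h \<le> 1"
    using has_integral_le[OF h_int const] h_le by (simp add: abs_le_iff)
  text \<open>The value \<open>h 0 = 0\<close> is a junk value of the division, so \<open>h\<close> is compared with the
    lower bound off the null set \<open>{0}\<close>.\<close>
  define h' where "h' x = (if x = 0 then P / pi else h x)" for x
  have h'_int: "(h' has_integral integral {-d..d} h) {-d..d}"
    by (rule has_integral_spike[OF negligible_sing[of 0] _ h_int]) (simp add: h'_def)
  have lower_int: "((\<lambda>x. P / pi * (1 - P\<^sup>2 * x\<^sup>2 / 3)) has_integral 1 - pi\<^sup>2 / 36) {-d..d}"
  proof -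
    have "((\<lambda>x. P / pi * (1 - P\<^sup>2 * x\<^sup>2 / 3)) has_integral
        (P / pi * (d - P\<^sup>2 * d ^ 3 / 9) - P / pi * ((-d) - P\<^sup>2 * (-d) ^ 3 / 9))) {-d..d}"
      using d0 by (intro has_integral_real_antiderivative[where F="\<lambda>x. P / pi * (x - P\<^sup>2 * x ^ 3 / 9)"])
        (rule derivative_eq_intros refl | simp)+
    moreover have "P / pi * (d - P\<^sup>2 * d ^ 3 / 9) - P / pi * ((-d) - P\<^sup>2 * (-d) ^ 3 / 9) = 1 - pi\<^sup>2 / 36"
      unfolding d_def using P by (simp add: power_divide power2_eq_square power3_eq_cube field_simps)
    ultimately show ?thesis by simp
  qed
  have lower_le: "P / pi * (1 - P\<^sup>2 * x\<^sup>2 / 3) \<le> h' x" if "x \<in> {-d..d}" for x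
    using sin_sq_div_ge[OF P, of x] that P by (auto simp: h'_def h_def d_def abs_le_iff)
  show "1 - pi\<^sup>2 / 36 \<le> integral {-d..d} h"
    using has_integral_le[OF lower_int h'_int lower_le] .
qed

lemma cvdj_detect_prob_constant:
  assumes "P > 0" and "is_constant_list n z"
  shows "1 - pi\<^sup>2 / 36 \<le> cvdj_detect_prob n P z" "cvdj_detect_prob n P z \<le> 1"
  using integral_sin_sq_div_window[OF assms(1)]
  unfolding cvdj_detect_prob_def cvdj_delta_def norm_cvdj_phi_constant_sq[OF assms] by auto

lemma pi_sq_le: "pi\<^sup>2 \<le> 9.87"
proof -
  have "pi * pi \<le> 3.1416 * 3.1416" using pi_approx pi_gt_zero by (intro mult_mono) auto
  then show ?thesis by (simp add: power2_eq_square)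
qed

lemma cvdj_error_prob_threshold_le:
  assumes P: "P > 0" and z: "is_constant_list n z \<or> is_balanced_list n z"
  shows "cvdj_error_prob n P z (9 * m) (\<lambda>bs. 4 * m \<le> count_list bs True) \<le> exp (- real m)"
proof (cases "is_constant_list n z")
  case True
  then have "0.72 \<le> cvdj_detect_prob n P z" "cvdj_detect_prob n P z \<le> 1"
    using cvdj_detect_prob_constant[OF P] pi_sq_le by force+
  then show ?thesis
    using outcome_prob_few_detections_le True by (simp add: cvdj_error_prob_def not_le)
next
  case False
  then have "0 \<le> cvdj_detect_prob n P z" "cvdj_detect_prob n P z \<le> 0.21"
    using z cvdj_detect_prob_balanced[OF P] pi_sq_le by force+
  then show ?thesis
    using outcome_prob_many_detections_le False by (simp add: cvdj_error_prob_def)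
qed

theorem theorem2:
  shows "\<exists>C K :: real. C > 0 \<and> K > 0 \<and>
    (\<forall>n P (m::nat). P > 0 \<longrightarrow> m \<ge> 1 \<longrightarrow>
      (\<exists>r D. real r \<le> K * real m \<and>
        (\<forall>z. is_constant_list n z \<or> is_balanced_list n z \<longrightarrow>
           cvdj_error_prob n P z r D \<le> C * exp (- real m))))"
proof (rule exI[of _ 1], rule exI[of _ 9], intro conjI allI impI)
  fix n m :: nat and P :: real
  assume "P > 0"
  then show "\<exists>r D. real r \<le> 9 * real m \<and>
      (\<forall>z. is_constant_list n z \<or> is_balanced_list n z \<longrightarrow>
         cvdj_error_prob n P z r D \<le> 1 * exp (- real m))"
    using cvdj_error_prob_threshold_le
    by (intro exI[of _ "9 * m"] exI[of _ "\<lambda>bs. 4 * m \<le> count_list bs True"]) auto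
qed simp_all

end
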